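(* Let $0<\lambda<1/e$ and $E(z)=\lambda e^z$. For every $r>0$, $\lim_{x\to\infty}L^r(x)/x=0$. Moreover, for all $s>r\ge 0$... more precisely for all real $s>r>0$ and every $\gamma>0$, $\lim_{x\to\infty}\bigl(L^s(x)\bigr)^\gamma/L^r(x)=0$.
   Context: For $0<\lambda<1/e$, $E(z)=\lambda e^z$ has real fixed points $\alpha<1<\beta$ with $E'(\beta)=\beta$. $S$ is the entire solution of Schröder's equation $S(\beta z)=E(S(z))$ with $S(0)=\beta$, $S'(0)=1$; it is real and strictly increasing on $\mathbb R$ and maps $\mathbb R$ bijectively onto $(\alpha,\infty)$. For $r\in\mathbb R$ the fractional iterate $E^r:[\alpha,\infty)\to[\alpha,\infty)$ is $E^r(\alpha)=\alpha$, $E^r(x)=S(\beta^rS^{-1}(x))$ for $x>\alpha$; $L^r=E^{-r}$, so $L(x)=\log x-\log\lambda$. *)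

theory Defs
  imports "HOL-Analysis.Analysis"
begin

definition fixA :: "real \<Rightarrow> real" where
  "fixA lam = (THE a. a < 1 \<and> lam * exp a = a)"

definition fixB :: "real \<Rightarrow> real" where
  "fixB lam = (THE b. 1 < b \<and> lam * exp b = b)"

definition schroeder :: "real \<Rightarrow> complex \<Rightarrow> complex" where
  "schroeder lam = (THE S. S holomorphic_on UNIV
      \<and> (\<forall>z. S (complex_of_real (fixB lam) * z) = complex_of_real lam * exp (S z))
      \<and> S 0 = complex_of_real (fixB lam) \<and> deriv S 0 = 1)"

text \<open>Its restriction to the real line (real-valued there).\<close>

definition schroederR :: "real \<Rightarrow> real \<Rightarrow> real" where
  "schroederR lam x = Re (schroeder lam (complex_of_real x))"

text \<open>Inverse of the real Schroeder function on (alpha, infinity).\<close>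

definition schroederR_inv :: "real \<Rightarrow> real \<Rightarrow> real" where
  "schroederR_inv lam y = (THE x. schroederR lam x = y)"

definition iterE :: "real \<Rightarrow> real \<Rightarrow> real \<Rightarrow> real" where
  "iterE lam r x = (if x = fixA lam then fixA lam
      else schroederR lam (fixB lam powr r * schroederR_inv lam x))"

text \<open>Fractional iterate L^r = E^(-r) of the logarithm L(x) = ln x - ln lam.\<close>

definition iterL :: "real \<Rightarrow> real \<Rightarrow> real \<Rightarrow> real" where
  "iterL lam r x = iterE lam (- r) x"

end

theory Submission
  imports Defs "HOL-Complex_Analysis.Complex_Analysis"
begin

text \<open>Moving the repelling fixed point \<open>\<beta>\<close> of \<open>E\<close> to 0 gives \<open>E0 t = \<beta> (e\<^sup>t - 1)\<close> with multiplier \<open>\<beta> > 1\<close>.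
  The Koenigs limit of \<open>\<beta>\<^sup>n L0\<^sup>n\<close> linearizes \<open>L0\<close> near 0; its local inverse \<open>\<phi>\<close> extends to an
  entire function by \<open>T z = E0\<^sup>n (\<phi> (z / \<beta>\<^sup>n))\<close>, and \<open>S = \<beta> + T\<close> is the unique Schroeder function,
  real on the real line by reflection.

  On the real line \<open>S y = \<lambda> exp (S (y / \<beta>))\<close>, and the derivative relation
  \<open>S' y = S y S' (y / \<beta>) / \<beta>\<close> propagates \<open>S' \<ge> 1/2\<close> from a neighbourhood of 0 to \<open>[0, \<infinity>)\<close>.
  Hence \<open>S (c u) / S u = exp (S (c u / \<beta>) - S (u / \<beta>)) \<le> exp (- (1 - c) u / (2 \<beta>))\<close> for \<open>0 < c < 1\<close>.
  As \<open>L\<^sup>r x = S (\<beta> powr (-r) * S\<inverse> x)\<close>, both limits are limits of such ratios, with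
  \<open>c = \<beta> powr (-r)\<close> and \<open>c = \<beta> powr (r - s)\<close>.\<close>

lemma eq_id_if_commutes_with_scaling:
  fixes f :: "complex \<Rightarrow> complex" and c :: real
  assumes c: "1 < c" and f': "(f has_field_derivative 1) (at 0)" and f0: "f 0 = 0"
    and scaling: "\<And>x. norm x < d \<Longrightarrow> f (x / of_real c) = f x / of_real c"
    and x: "norm x < d"
  shows "f x = x"
proof (cases "x = 0")
  case True
  then show ?thesis using f0 by simp
next
  case False
  define t where "t n = x / of_real c ^ n" for n
  have t_Suc: "t (Suc n) = t n / of_real c" for n
    by (simp add: t_def field_simps)
  have t_small: "norm (t n) < d" for n
  proof (induction n)
    case 0
    then show ?case using x by (simp add: t_def)
  next
    case (Suc n)
    have "norm (t (Suc n)) \<le> norm (t n)"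
      using c by (simp add: t_Suc norm_divide divide_le_eq mult_le_cancel_left1)
    then show ?case using Suc by linarith
  qed
  have f_t: "f (t n) = f x / of_real c ^ n" for n
  proof (induction n)
    case 0
    then show ?case by (simp add: t_def)
  next
    case (Suc n)
    then show ?case
      by (simp add: t_Suc scaling[OF t_small] field_simps)
  qed
  have "(\<lambda>n. x * (1 / of_real c) ^ n) \<longlonglongrightarrow> x * 0"
    using c by (intro tendsto_mult tendsto_const LIMSEQ_power_zero) (simp add: norm_divide)
  then have "t \<longlonglongrightarrow> 0"
    unfolding t_def by (simp add: power_one_over)
  then have "filterlim t (at 0) sequentially"
    using False c by (intro filterlim_atI) (auto simp: t_def)
  moreover have "((\<lambda>y. f y / y) \<longlongrightarrow> 1) (at 0)"
    using f' f0 by (simp add: has_field_derivative_iff)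
  ultimately have "(\<lambda>n. f (t n) / t n) \<longlonglongrightarrow> 1"
    using filterlim_compose by blast
  moreover have "f (t n) / t n = f x / x" for n
    using c False unfolding f_t by (simp add: t_def)
  ultimately have "f x / x = 1"
    by (simp add: LIMSEQ_const_iff)
  then show ?thesis
    using False by (simp add: field_simps)
qed

lemma real_scaling_induct:
  fixes b d :: real
  assumes b: "1 < b" and "0 < d" and near_0: "\<And>y. \<bar>y\<bar> \<le> d \<Longrightarrow> P y"
    and step: "\<And>y. P (y / b) \<Longrightarrow> P y"
  shows "P y"
proof -
  obtain n where "\<bar>y\<bar> / d < b ^ n"
    using real_arch_pow[OF b] by blast
  then have "\<bar>y\<bar> \<le> b ^ n * d"
    using \<open>0 < d\<close> by (simp add: divide_less_eq less_imp_le)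
  then show ?thesis
  proof (induction n arbitrary: y)
    case 0
    then show ?case using near_0 by simp
  next
    case (Suc n)
    have "\<bar>y / b\<bar> \<le> b ^ n * d"
      using Suc.prems b by (simp add: divide_le_eq mult_ac)
    then show ?case
      using Suc.IH step by blast
  qed
qed

lemma tendsto_exp_minus_0:
  fixes g :: "real \<Rightarrow> real"
  assumes "filterlim g at_top at_top"
  shows "((\<lambda>x. exp (- g x)) \<longlongrightarrow> 0) at_top"
  using filterlim_compose[OF exp_at_bot] assms filterlim_uminus_at_bot by fastforce

lemma exp_fixed_point_gt_1_unique:
  fixes lam x y :: real
  assumes lam: "0 < lam" "lam < exp (-1)"
    and x: "1 < x" "lam * exp x = x" and y: "1 < y" "lam * exp y = y"
  shows "x = y"
proof (rule ccontr)
  assume "x \<noteq> y"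
  define f where "f t = lam * exp t - t" for t
  have f': "(f has_real_derivative lam * exp t - 1) (at t)" for t
    unfolding f_def by (auto intro!: derivative_eq_intros)
  have "lam * exp 1 < exp (-1) * exp 1"
    using lam by simp
  then have f1: "f 1 < 0"
    by (simp add: f_def exp_minus)
  define p q where "p = min x y" and "q = max x y"
  have pq: "1 < p" "p < q" "f p = 0" "f q = 0"
    using \<open>x \<noteq> y\<close> x y by (auto simp: p_def q_def f_def min_def max_def)
  \<comment> \<open>\<open>f\<close> is convex with \<open>f 1 < 0\<close>: it increases somewhere in \<open>(1, p)\<close>, hence strictly beyond \<open>p\<close>\<close>
  obtain w where w: "1 < w" "w < p" "f p - f 1 = (p - 1) * (lam * exp w - 1)"
    using MVT2[OF pq(1) f'] by blast
  obtain z where z: "p < z" "z < q" "f q - f p = (q - p) * (lam * exp z - 1)"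
    using MVT2[OF pq(2) f'] by blast
  have "0 < (p - 1) * (lam * exp w - 1)"
    using w(3) pq f1 by simp
  then have "1 < lam * exp w"
    using pq by (simp add: zero_less_mult_iff)
  also have "\<dots> < lam * exp z"
    using w z lam by simp
  also have "\<dots> = 1"
    using z pq by simp
  finally show False
    by simp
qed

lemma exp_fixed_point_gt_1_exists:
  fixes lam :: real
  assumes lam: "0 < lam" "lam < exp (-1)"
  obtains x where "1 < x" "lam * exp x = x"
proof -
  define f where "f t = lam * exp t - t" for t
  have f1: "f 1 < 0"
  proof -
    have "lam * exp 1 < exp (-1) * exp 1"
      using lam by simp
    then show ?thesis
      by (simp add: f_def exp_minus)
  qed
  define X where "X = 4 / lam + 1"
  have X: "1 < X"
    using lam by (simp add: X_def)
  have "0 \<le> f X"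
  proof -
    have "X * X / 4 \<le> (1 + X / 2) * (1 + X / 2)"
      using X by (simp add: algebra_simps)
    also have "\<dots> \<le> exp (X / 2) * exp (X / 2)"
      using X exp_ge_add_one_self[of "X / 2"] by (intro mult_mono) auto
    also have "\<dots> = exp X"
      by (simp add: exp_add [symmetric])
    finally have "lam * (X * X / 4) \<le> lam * exp X"
      using lam by simp
    moreover have "X \<le> lam * (X * X / 4)"
      using lam X by (simp add: X_def field_simps)
    ultimately show ?thesis
      by (simp add: f_def)
  qed
  moreover have "isCont f t" for t
    unfolding f_def by (intro continuous_intros)
  ultimately obtain x where "1 \<le> x" "x \<le> X" "f x = 0"
    using IVT[of f 1 0 X] f1 X by fastforce
  moreover have "x \<noteq> 1"
    using \<open>f x = 0\<close> f1 by auto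
  ultimately show ?thesis
    using that by (simp add: f_def le_less)
qed

lemma fixB_spec:
  fixes lam :: real
  assumes "0 < lam" "lam < exp (-1)"
  shows "1 < fixB lam" and "lam * exp (fixB lam) = fixB lam"
proof -
  obtain x where x: "1 < x" "lam * exp x = x"
    using exp_fixed_point_gt_1_exists[OF assms] .
  have "fixB lam = x"
    unfolding fixB_def using x exp_fixed_point_gt_1_unique[OF assms] by blast
  then show "1 < fixB lam" "lam * exp (fixB lam) = fixB lam"
    using x by auto
qed

section \<open>Koenigs linearization of the shifted exponential\<close>

text \<open>With \<open>b = \<beta>\<close>, \<open>E0 t = E (\<beta> + t) - \<beta>\<close> is \<open>E\<close> with its repelling fixed point moved to 0,
  and \<open>L0\<close> is its local inverse.\<close>

locale exp_linearization =
  fixes b :: real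
  assumes b_gt_1: "1 < b"
begin

definition E0 :: "complex \<Rightarrow> complex" where
  "E0 t = of_real b * (exp t - 1)"

definition L0 :: "complex \<Rightarrow> complex" where
  "L0 u = ln (1 + u / of_real b)"

text \<open>Any factor in \<open>(1/b, 1/sqrt b)\<close> would do for \<open>rho\<close>: \<open>L0\<close> contracts by \<open>rho\<close> on
  \<open>cball 0 rad\<close>, and \<open>q = b * rho\<^sup>2 < 1\<close> makes the Koenigs approximants converge geometrically.\<close>

definition rho :: real where "rho = 2 / (b + 1)"
definition rad :: real where "rad = (rho - 1/b) * b\<^sup>2 / 2"
definition q :: real where "q = b * rho\<^sup>2"

lemma b_pos: "0 < b"
  using b_gt_1 by simp

lemma rho_pos: "0 < rho" and rho_lt_1: "rho < 1" and rho_gt_inverse_b: "1/b < rho"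
  using b_gt_1 by (auto simp: rho_def field_simps)

lemma rad_pos: "0 < rad"
  using rho_gt_inverse_b b_gt_1 by (simp add: rad_def)

lemma rad_le_half_b: "rad \<le> b/2"
proof -
  have "rho * b \<le> 2"
    using b_gt_1 by (simp add: rho_def field_simps)
  then have "(rho - 1/b) * b \<le> 1"
    using b_gt_1 by (simp add: algebra_simps)
  then have "(rho - 1/b) * b * b \<le> b"
    using b_gt_1 by (simp add: mult_right_le_one_le)
  then show ?thesis
    unfolding rad_def using b_gt_1 by (simp add: power2_eq_square algebra_simps)
qed

lemma q_pos: "0 < q" and q_lt_1: "q < 1"
proof -
  show "0 < q"
    using rho_pos b_pos by (simp add: q_def)
  have "(b - 1) * (b - 1) > 0"
    using b_gt_1 by simp
  then have "4 * b < (b + 1)\<^sup>2"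
    by (simp add: power2_eq_square algebra_simps)
  then show "q < 1"
    using b_gt_1 by (simp add: q_def rho_def field_simps power2_eq_square)
qed

lemma L0_0 [simp]: "L0 0 = 0"
  by (simp add: L0_def)

lemma L0_linear_approx:
  assumes "norm u \<le> b/2"
  shows "norm (L0 u - u / of_real b) \<le> 2 * norm u ^ 2 / b ^ 2"
proof -
  define z where "z = u / of_real b"
  have nz: "norm z = norm u / b"
    using b_pos by (simp add: z_def norm_divide)
  have z_le: "norm z \<le> 1/2"
    using assms b_pos by (simp add: nz field_simps)
  then have "norm (ln (1 + z) - z) \<le> norm z ^ 2 / (1 - norm z)"
    by (intro Ln_approx_linear) simp
  also have "\<dots> \<le> norm z ^ 2 / (1/2)"
    using z_le by (intro divide_left_mono) auto
  also have "\<dots> = 2 * norm u ^ 2 / b ^ 2"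
    by (simp add: nz power_divide)
  finally show ?thesis
    by (simp add: L0_def z_def)
qed

lemma L0_contract:
  assumes "norm u \<le> rad"
  shows "norm (L0 u) \<le> rho * norm u"
proof -
  have "norm (L0 u) \<le> norm (u / of_real b) + norm (L0 u - u / of_real b)"
    by (metis add.commute diff_add_cancel norm_triangle_ineq)
  also have "\<dots> \<le> norm u / b + 2 * norm u ^ 2 / b ^ 2"
    using L0_linear_approx assms rad_le_half_b b_pos by (simp add: norm_divide)
  also have "\<dots> \<le> norm u / b + 2 * (rad * norm u) / b ^ 2"
    using assms by (intro add_left_mono divide_right_mono)
      (auto simp: power2_eq_square intro: mult_right_mono)
  also have "\<dots> = rho * norm u"
    using b_pos by (simp add: rad_def field_simps)
  finally show ?thesis .
qed

lemma L0_holomorphic: "L0 holomorphic_on ball 0 b"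
proof -
  have "(\<lambda>u. Ln (1 + u / of_real b)) holomorphic_on ball 0 b"
  proof (rule holomorphic_on_Ln')
    fix u :: complex
    assume "u \<in> ball 0 b"
    then have "\<bar>Re u\<bar> < b"
      using abs_Re_le_cmod le_less_trans by fastforce
    then have "Re (1 + u / of_real b) > 0"
      using b_pos by (simp add: field_simps)
    then show "1 + u / of_real b \<notin> \<real>\<^sub>\<le>\<^sub>0"
      by (auto simp: complex_nonpos_Reals_iff)
  qed (use b_pos in \<open>auto intro!: holomorphic_intros\<close>)
  then show ?thesis
    by (simp add: L0_def [abs_def])
qed

lemma E0_L0:
  assumes "norm u < b"
  shows "E0 (L0 u) = u"
proof -
  have "norm (u / of_real b) < 1"
    using assms b_pos by (simp add: norm_divide)
  then have "1 + u / of_real b \<noteq> 0"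
    by (metis add_eq_0_iff norm_minus_cancel norm_one less_irrefl)
  then show ?thesis
    using b_pos by (simp add: E0_def L0_def field_simps)
qed

lemma L0_E0:
  assumes "\<bar>Im t\<bar> < pi"
  shows "L0 (E0 t) = t"
  using assms b_pos by (simp add: E0_def L0_def)

lemma funpow_L0_bound:
  assumes "norm u \<le> rad"
  shows "norm ((L0 ^^ n) u) \<le> rho ^ n * norm u"
proof (induction n)
  case 0
  then show ?case by simp
next
  case (Suc n)
  have "rho ^ n * norm u \<le> norm u"
    using rho_pos rho_lt_1 by (simp add: mult_left_le_one_le power_le_one)
  then have "norm ((L0 ^^ n) u) \<le> rad"
    using Suc assms by linarith
  then have "norm ((L0 ^^ Suc n) u) \<le> rho * norm ((L0 ^^ n) u)"
    by (simp add: L0_contract)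
  also have "\<dots> \<le> rho * (rho ^ n * norm u)"
    using Suc rho_pos by (simp add: mult_left_mono)
  finally show ?case
    by simp
qed

lemma funpow_L0_le:
  assumes "norm u \<le> rad"
  shows "norm ((L0 ^^ n) u) \<le> norm u"
proof -
  have "rho ^ n * norm u \<le> norm u"
    using rho_pos rho_lt_1 by (simp add: mult_left_le_one_le power_le_one)
  then show ?thesis
    using funpow_L0_bound[OF assms, of n] by linarith
qed

lemma funpow_L0_holomorphic: "(L0 ^^ n) holomorphic_on cball 0 rad"
proof (induction n)
  case 0
  then show ?case by (simp add: id_def)
next
  case (Suc n)
  have "cball 0 rad \<subseteq> ball 0 b"
    using rad_le_half_b b_pos by auto
  moreover have "(L0 ^^ n) ` cball 0 rad \<subseteq> cball 0 rad"
    by (auto intro: order_trans[OF funpow_L0_le])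
  ultimately have "(L0 \<circ> (L0 ^^ n)) holomorphic_on cball 0 rad"
    by (intro holomorphic_on_compose_gen[OF Suc holomorphic_on_subset[OF L0_holomorphic]])
  then show ?case
    by (simp add: o_def)
qed

lemma E0_holomorphic: "E0 holomorphic_on A"
  unfolding E0_def [abs_def] by (intro holomorphic_intros)

lemma funpow_E0_holomorphic: "(E0 ^^ n) holomorphic_on A"
proof (induction n)
  case 0
  then show ?case by (simp add: id_def)
next
  case (Suc n)
  have "(E0 \<circ> (E0 ^^ n)) holomorphic_on A"
    by (rule holomorphic_on_compose_gen[OF Suc E0_holomorphic]) auto
  then show ?case
    by (simp add: o_def)
qed

definition koenigs_seq :: "nat \<Rightarrow> complex \<Rightarrow> complex" where
  "koenigs_seq n u = of_real b ^ n * (L0 ^^ n) u"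

definition koenigs_step :: "nat \<Rightarrow> complex \<Rightarrow> complex" where
  "koenigs_step i u = koenigs_seq (Suc i) u - koenigs_seq i u"

definition koenigs :: "complex \<Rightarrow> complex" where
  "koenigs u = u + (\<Sum>i. koenigs_step i u)"

lemma koenigs_step_bound:
  assumes "norm u \<le> rad"
  shows "norm (koenigs_step i u) \<le> 2 / b * norm u ^ 2 * q ^ i"
proof -
  define v where "v = (L0 ^^ i) u"
  have v_le: "norm v \<le> rho ^ i * norm u"
    unfolding v_def using assms by (rule funpow_L0_bound)
  have v_half: "norm v \<le> b/2"
    using funpow_L0_le[OF assms, of i] assms rad_le_half_b by (simp add: v_def)
  have "koenigs_step i u = of_real b ^ Suc i * (L0 v - v / of_real b)"
    using b_pos by (simp add: koenigs_step_def koenigs_seq_def v_def field_simps)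
  then have "norm (koenigs_step i u) = b ^ Suc i * norm (L0 v - v / of_real b)"
    using b_pos by (simp add: norm_mult norm_power)
  also have "\<dots> \<le> b ^ Suc i * (2 * norm v ^ 2 / b ^ 2)"
    using L0_linear_approx[OF v_half] b_pos by (intro mult_left_mono) auto
  also have "\<dots> \<le> b ^ Suc i * (2 * (rho ^ i * norm u) ^ 2 / b ^ 2)"
    using v_le b_pos by (intro mult_left_mono divide_right_mono power_mono) auto
  also have "\<dots> = 2 / b * norm u ^ 2 * q ^ i"
    using b_pos by (simp add: q_def power_mult_distrib power2_eq_square field_simps
        power_mult[symmetric])
  finally show ?thesis .
qed

lemma summable_geometric_q: "summable (\<lambda>i. c * q ^ i)"
  using q_pos q_lt_1 by (intro summable_mult summable_geometric) simp

lemma summable_norm_koenigs_step: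
  assumes "norm u \<le> rad"
  shows "summable (\<lambda>i. norm (koenigs_step i u))"
  by (rule summable_comparison_test'[OF summable_geometric_q[of "2 / b * norm u ^ 2"]])
    (use koenigs_step_bound[OF assms] in auto)

lemma koenigs_seq_tendsto:
  assumes "norm u \<le> rad"
  shows "(\<lambda>n. koenigs_seq n u) \<longlonglongrightarrow> koenigs u"
proof -
  have "koenigs_seq n u = u + (\<Sum>i<n. koenigs_step i u)" for n
    unfolding koenigs_step_def by (subst sum_lessThan_telescope) (simp add: koenigs_seq_def)
  moreover have "(\<lambda>n. u + (\<Sum>i<n. koenigs_step i u)) \<longlonglongrightarrow> koenigs u"
    using summable_norm_cancel[OF summable_norm_koenigs_step[OF assms]]
    unfolding koenigs_def by (intro tendsto_add tendsto_const summable_LIMSEQ)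
  ultimately show ?thesis
    by simp
qed

lemma koenigs_0 [simp]: "koenigs 0 = 0"
proof -
  have "(L0 ^^ n) 0 = 0" for n
    by (induction n) auto
  then have "(\<lambda>n. koenigs_seq n 0) \<longlonglongrightarrow> 0"
    by (simp add: koenigs_seq_def)
  then show ?thesis
    using koenigs_seq_tendsto[of 0] rad_pos LIMSEQ_unique by auto
qed

lemma koenigs_near_id:
  assumes "norm u \<le> rad"
  shows "norm (koenigs u - u) \<le> 2 / (b * (1 - q)) * norm u ^ 2"
proof -
  have "norm (koenigs u - u) \<le> (\<Sum>i. norm (koenigs_step i u))"
    unfolding koenigs_def using summable_norm[OF summable_norm_koenigs_step[OF assms]] by simp
  also have "\<dots> \<le> (\<Sum>i. 2 / b * norm u ^ 2 * q ^ i)"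
    using koenigs_step_bound[OF assms]
    by (intro suminf_le summable_norm_koenigs_step[OF assms] summable_geometric_q)
  also have "\<dots> = 2 / (b * (1 - q)) * norm u ^ 2"
    using q_pos q_lt_1 by (subst suminf_mult) (auto simp: suminf_geometric)
  finally show ?thesis .
qed

lemma koenigs_L0:
  assumes "norm u \<le> rad"
  shows "koenigs (L0 u) = koenigs u / of_real b"
proof -
  have "norm (L0 u) \<le> rad"
    using L0_contract[OF assms] rho_pos rho_lt_1 assms
    by (smt (verit, best) mult_left_le_one_le norm_ge_zero)
  then have "(\<lambda>n. koenigs_seq n (L0 u)) \<longlonglongrightarrow> koenigs (L0 u)"
    by (rule koenigs_seq_tendsto)
  moreover have "koenigs_seq n (L0 u) = koenigs_seq (Suc n) u / of_real b" for n
    using b_pos by (simp add: koenigs_seq_def funpow_Suc_right del: funpow.simps)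
  moreover have "(\<lambda>n. koenigs_seq (Suc n) u / of_real b) \<longlonglongrightarrow> koenigs u / of_real b"
    using LIMSEQ_Suc[OF koenigs_seq_tendsto[OF assms]] using b_pos by (intro tendsto_divide tendsto_const) auto
  ultimately show ?thesis
    using LIMSEQ_unique by auto
qed

lemma koenigs_holomorphic: "koenigs holomorphic_on ball 0 rad"
proof -
  have uniform: "uniform_limit (cball 0 rad) (\<lambda>n u. \<Sum>i<n. koenigs_step i u)
      (\<lambda>u. \<Sum>i. koenigs_step i u) sequentially"
  proof (rule Weierstrass_m_test[OF _ summable_geometric_q[of "2 / b * rad ^ 2"]])
    fix n u
    assume "u \<in> cball (0::complex) rad"
    then have u: "norm u \<le> rad"
      by simp
    then have "norm (koenigs_step n u) \<le> 2 / b * norm u ^ 2 * q ^ n"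
      by (rule koenigs_step_bound)
    also have "\<dots> \<le> 2 / b * rad ^ 2 * q ^ n"
      using u b_pos q_pos by (intro mult_right_mono mult_left_mono power_mono) auto
    finally show "norm (koenigs_step n u) \<le> 2 / b * rad ^ 2 * q ^ n" .
  qed
  have partial_sums: "(\<lambda>u. \<Sum>i<n. koenigs_step i u) holomorphic_on cball 0 rad" for n
    unfolding koenigs_step_def koenigs_seq_def
    by (intro holomorphic_intros funpow_L0_holomorphic)
  then have "\<forall>\<^sub>F n in sequentially. continuous_on (cball 0 rad) (\<lambda>u. \<Sum>i<n. koenigs_step i u)
      \<and> (\<lambda>u. \<Sum>i<n. koenigs_step i u) holomorphic_on ball 0 rad"
    by (intro always_eventually allI conjI holomorphic_on_imp_continuous_on partial_sums
        holomorphic_on_subset[OF partial_sums] ball_subset_cball)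
  then have "(\<lambda>u. \<Sum>i. koenigs_step i u) holomorphic_on ball 0 rad"
    using holomorphic_uniform_limit[OF _ uniform] by auto
  then show ?thesis
    unfolding koenigs_def [abs_def] by (intro holomorphic_intros)
qed

lemma koenigs_has_derivative_1: "(koenigs has_field_derivative 1) (at 0)"
proof -
  define C where "C = 2 / (b * (1 - q))"
  have "\<forall>\<^sub>F y in at (0::complex). norm ((koenigs y - koenigs 0) / (y - 0) - 1) \<le> C * norm y"
  proof -
    have "\<forall>\<^sub>F y in at (0::complex). y \<in> ball 0 rad \<and> y \<noteq> 0"
      using rad_pos unfolding eventually_at by (intro exI[of _ rad]) (auto simp: dist_norm)
    then show ?thesis
    proof (rule eventually_mono)
      fix y :: complex
      assume y: "y \<in> ball 0 rad \<and> y \<noteq> 0"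
      then have "norm ((koenigs y - koenigs 0) / (y - 0) - 1) = norm (koenigs y - y) / norm y"
        by (simp add: norm_divide [symmetric] diff_divide_distrib)
      also have "\<dots> \<le> C * norm y ^ 2 / norm y"
        using koenigs_near_id[of y] y by (intro divide_right_mono) (auto simp: C_def)
      also have "\<dots> = C * norm y"
        using y by (simp add: power2_eq_square)
      finally show "norm ((koenigs y - koenigs 0) / (y - 0) - 1) \<le> C * norm y" .
    qed
  qed
  moreover have "((\<lambda>y. C * norm y) \<longlongrightarrow> 0) (at (0::complex))"
    by (rule tendsto_eq_intros | simp)+
  ultimately have "((\<lambda>y. (koenigs y - koenigs 0) / (y - 0) - 1) \<longlongrightarrow> 0) (at 0)"
    by (rule Lim_null_comparison)
  then show ?thesis
    by (simp add: has_field_derivative_iff LIM_zero_iff)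
qed

definition is_linearizer :: "(complex \<Rightarrow> complex) \<Rightarrow> bool" where
  "is_linearizer T \<longleftrightarrow> T holomorphic_on UNIV \<and> (\<forall>z. T (of_real b * z) = E0 (T z))
     \<and> T 0 = 0 \<and> (T has_field_derivative 1) (at 0)"

lemma L0_linearizer:
  assumes "is_linearizer T" and "norm (T (x / of_real b)) < pi"
  shows "L0 (T x) = T (x / of_real b)"
proof -
  have "T x = T (of_real b * (x / of_real b))"
    using b_pos by simp
  also have "\<dots> = E0 (T (x / of_real b))"
    using assms(1) by (simp only: is_linearizer_def)
  finally have "T x = E0 (T (x / of_real b))" .
  moreover have "\<bar>Im (T (x / of_real b))\<bar> < pi"
    using assms(2) abs_Im_le_cmod le_less_trans by blast
  ultimately show ?thesis
    by (simp add: L0_E0)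
qed

text \<open>Near 0 every linearizer is inverse to the Koenigs function, because
  \<open>koenigs \<circ> T\<close> commutes with \<open>z \<mapsto> z/b\<close> and has derivative 1 at 0.\<close>

lemma koenigs_linearizer_near_0:
  assumes T: "is_linearizer T" and "0 < r"
  obtains d where "0 < d" "\<And>x. norm x < d \<Longrightarrow> norm (T x) < r \<and> koenigs (T x) = x"
proof -
  define r' where "r' = min r (min rad 1)"
  have "0 < r'"
    using \<open>0 < r\<close> rad_pos by (simp add: r'_def)
  have "isCont T 0" "T 0 = 0"
    using T by (auto simp: is_linearizer_def intro: DERIV_isCont)
  then have "(T \<longlongrightarrow> 0) (at 0)"
    by (simp add: isCont_def)
  then obtain d where d: "0 < d" "\<And>x. x \<noteq> 0 \<and> norm (x - 0) < d \<Longrightarrow> norm (T x - 0) < r'"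
    using LIM_D[of T 0 0 r'] \<open>0 < r'\<close> by auto
  have T_small: "norm (T x) < r'" if "norm x < d" for x
    using d(2)[of x] that T \<open>0 < r'\<close> by (cases "x = 0") (auto simp: is_linearizer_def)
  have scaling: "koenigs (T (x / of_real b)) = koenigs (T x) / of_real b" if x: "norm x < d" for x
  proof -
    have "norm (x / of_real b) \<le> norm x"
      using b_gt_1 by (simp add: norm_divide divide_le_eq mult_le_cancel_left1)
    then have "norm (T (x / of_real b)) < pi"
      using T_small[of "x / of_real b"] x pi_gt3 by (simp add: r'_def)
    then have "T (x / of_real b) = L0 (T x)"
      using L0_linearizer[OF T] by simp
    moreover have "norm (T x) \<le> rad"
      using T_small[OF x] by (simp add: r'_def)
    ultimately show ?thesis
      by (simp add: koenigs_L0)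
  qed
  have "((koenigs \<circ> T) has_field_derivative 1 * 1) (at 0)"
    using T koenigs_has_derivative_1 unfolding is_linearizer_def by (metis DERIV_chain)
  moreover have "(koenigs \<circ> T) 0 = 0"
    using T by (simp add: is_linearizer_def)
  ultimately have "(koenigs \<circ> T) x = x" if "norm x < d" for x
    using eq_id_if_commutes_with_scaling[OF b_gt_1, of "koenigs \<circ> T" d x] scaling that
    by (simp only: o_apply mult_1)
  moreover have "norm (T x) < r" if "norm x < d" for x
    using T_small[OF that] by (simp add: r'_def)
  ultimately show ?thesis
    using that d(1) by simp
qed

lemma koenigs_local_inverse:
  obtains r1 eps phi where "0 < r1" "r1 \<le> rad" "inj_on koenigs (ball 0 r1)" "0 < eps"
    "phi holomorphic_on ball 0 eps"
    "\<And>z. z \<in> ball 0 eps \<Longrightarrow> phi z \<in> ball 0 r1 \<and> koenigs (phi z) = z"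
    "(phi has_field_derivative 1) (at 0)"
proof -
  have d_koenigs: "deriv koenigs 0 = 1"
    using koenigs_has_derivative_1 by (rule DERIV_imp_deriv)
  have "0 \<in> ball (0::complex) rad"
    using rad_pos by simp
  then obtain r1 where r1: "r1 > 0" "ball (0::complex) r1 \<subseteq> ball 0 rad" "inj_on koenigs (ball 0 r1)"
    using has_complex_derivative_locally_injective[OF koenigs_holomorphic _ open_ball]
      d_koenigs by (metis zero_neq_one)
  have r1_le: "r1 \<le> rad"
    using r1(1,2) by (simp add: ball_subset_ball_iff)
  have holo: "koenigs holomorphic_on ball 0 r1"
    using koenigs_holomorphic r1(2) by (rule holomorphic_on_subset)
  obtain g where g: "g holomorphic_on (koenigs ` ball 0 r1)"
      "\<And>z. z \<in> ball 0 r1 \<Longrightarrow> deriv koenigs z * deriv g (koenigs z) = 1"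
      "\<And>z. z \<in> ball 0 r1 \<Longrightarrow> g (koenigs z) = z"
    using holomorphic_has_inverse[OF holo open_ball r1(3)] by metis
  have open_image: "open (koenigs ` ball 0 r1)"
    by (rule open_mapping_thm3[OF holo open_ball r1(3)])
  have zero_in: "0 \<in> koenigs ` ball 0 r1"
    using r1(1) by (metis centre_in_ball image_eqI koenigs_0)
  obtain eps where eps: "eps > 0" "ball 0 eps \<subseteq> koenigs ` ball 0 r1"
    using open_image zero_in open_contains_ball by blast
  have "g field_differentiable at 0"
    using holomorphic_on_imp_differentiable_at[OF g(1) open_image zero_in] .
  moreover have "deriv g 0 = 1"
    using g(2)[of 0] r1(1) d_koenigs by simp
  ultimately have "(g has_field_derivative 1) (at 0)"
    using DERIV_deriv_iff_field_differentiable by metis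
  moreover have "g z \<in> ball 0 r1 \<and> koenigs (g z) = z" if "z \<in> ball 0 eps" for z
    using that eps(2) g(3) by auto
  ultimately show ?thesis
    using that r1 r1_le eps holomorphic_on_subset[OF g(1) eps(2)] by blast
qed

end

locale exp_linearization_inverse = exp_linearization +
  fixes r1 eps :: real and phi :: "complex \<Rightarrow> complex"
  assumes r1_pos: "0 < r1" and r1_le_rad: "r1 \<le> rad"
    and koenigs_inj: "inj_on koenigs (ball 0 r1)"
    and eps_pos: "0 < eps" and phi_holomorphic: "phi holomorphic_on ball 0 eps"
    and phi_inverse: "\<And>z. z \<in> ball 0 eps \<Longrightarrow> phi z \<in> ball 0 r1 \<and> koenigs (phi z) = z"
    and phi_has_derivative_1: "(phi has_field_derivative 1) (at 0)"
begin

lemma phi_E0: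
  assumes z: "z \<in> ball 0 eps"
  shows "phi z = E0 (phi (z / of_real b))"
proof -
  have "norm z / b \<le> norm z"
    using b_gt_1 by (simp add: divide_le_eq mult_le_cancel_left1)
  then have z_div: "z / of_real b \<in> ball 0 eps"
    using z b_pos by (simp add: norm_divide)
  have phi_z: "phi z \<in> ball 0 r1" "koenigs (phi z) = z"
    using phi_inverse[OF z] by auto
  then have "norm (phi z) \<le> rad"
    using r1_le_rad by simp
  then have "norm (L0 (phi z)) \<le> norm (phi z)"
    using L0_contract[of "phi z"] rho_pos rho_lt_1
    by (smt (verit, best) mult_left_le_one_le norm_ge_zero)
  moreover have "koenigs (L0 (phi z)) = z / of_real b"
    using \<open>norm (phi z) \<le> rad\<close> phi_z(2) koenigs_L0 by simp
  ultimately have "L0 (phi z) \<in> ball 0 r1" "koenigs (L0 (phi z)) = z / of_real b"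
    using phi_z(1) by auto
  then have "L0 (phi z) = phi (z / of_real b)"
    using koenigs_inj phi_inverse[OF z_div] by (auto simp: inj_on_def)
  moreover have "norm (phi z) < b"
    using phi_z(1) r1_le_rad rad_le_half_b b_pos by simp
  ultimately show ?thesis
    using E0_L0 by metis
qed

text \<open>The linearizer is continued from the ball where it equals \<open>phi\<close> by
  \<open>T z = E0\<^sup>n (phi (z / b\<^sup>n))\<close>, which does not depend on \<open>n\<close> once \<open>z / b\<^sup>n\<close> lies in that ball.\<close>

definition linearizer_on :: "nat \<Rightarrow> complex \<Rightarrow> complex" where
  "linearizer_on n z = (E0 ^^ n) (phi (z / of_real b ^ n))"

definition linearizer :: "complex \<Rightarrow> complex" where
  "linearizer z = linearizer_on (LEAST n. norm z < b ^ n * eps) z"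

lemma div_power_b_in_ball:
  fixes z :: complex
  assumes "norm z < b ^ n * eps"
  shows "z / of_real b ^ n \<in> ball 0 eps"
  using assms b_pos by (simp add: norm_divide norm_power divide_less_eq mult.commute)

lemma linearizer_on_holomorphic: "linearizer_on n holomorphic_on ball 0 (b ^ n * eps)"
proof -
  have "(\<lambda>z::complex. z / of_real b ^ n) ` ball 0 (b ^ n * eps) \<subseteq> ball 0 eps"
    using div_power_b_in_ball by auto
  then have "(phi \<circ> (\<lambda>z. z / of_real b ^ n)) holomorphic_on ball 0 (b ^ n * eps)"
    using b_pos by (intro holomorphic_on_compose_gen[OF _ phi_holomorphic] holomorphic_intros) auto
  then have "((E0 ^^ n) \<circ> (phi \<circ> (\<lambda>z. z / of_real b ^ n))) holomorphic_on ball 0 (b ^ n * eps)"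
    by (intro holomorphic_on_compose_gen[OF _ funpow_E0_holomorphic]) auto
  then show ?thesis
    by (simp add: linearizer_on_def [abs_def] o_def)
qed

lemma linearizer_on_Suc:
  assumes "norm z < b ^ n * eps"
  shows "linearizer_on (Suc n) z = linearizer_on n z"
proof -
  have "linearizer_on (Suc n) z = (E0 ^^ n) (E0 (phi ((z / of_real b ^ n) / of_real b)))"
    by (simp add: linearizer_on_def funpow_Suc_right mult.commute del: funpow.simps)
  also have "\<dots> = linearizer_on n z"
    using phi_E0[OF div_power_b_in_ball[OF assms]] by (simp add: linearizer_on_def)
  finally show ?thesis .
qed

lemma linearizer_on_mono:
  assumes "n \<le> m" and "norm z < b ^ n * eps"
  shows "linearizer_on m z = linearizer_on n z"
  using assms(1)
proof (induction m rule: dec_induct)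
  case base
  then show ?case by simp
next
  case (step m)
  have "b ^ n * eps \<le> b ^ m * eps"
    using step(1) b_gt_1 eps_pos by (simp add: power_increasing)
  then show ?case
    using step assms(2) linearizer_on_Suc by simp
qed

lemma ex_radius_power_b: "\<exists>n. norm (z::complex) < b ^ n * eps"
proof -
  obtain n where "norm z / eps < b ^ n"
    using real_arch_pow[OF b_gt_1] by blast
  then show ?thesis
    using eps_pos by (auto simp: divide_less_eq)
qed

lemma linearizer_eq:
  assumes "norm z < b ^ n * eps"
  shows "linearizer z = linearizer_on n z"
proof -
  define N where "N = (LEAST n. norm z < b ^ n * eps)"
  have "norm z < b ^ N * eps"
    unfolding N_def by (rule LeastI_ex[OF ex_radius_power_b])
  moreover have "N \<le> n"
    unfolding N_def using assms by (rule Least_le)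
  ultimately show ?thesis
    using linearizer_on_mono by (simp add: linearizer_def N_def)
qed

lemma linearizer_eq_phi: "z \<in> ball 0 eps \<Longrightarrow> linearizer z = phi z"
  using linearizer_eq[of z 0] by (simp add: linearizer_on_def)

lemma linearizer_holomorphic: "linearizer holomorphic_on UNIV"
  unfolding holomorphic_on_def
proof
  fix z :: complex
  obtain n where n: "norm z < b ^ n * eps"
    using ex_radius_power_b by blast
  have "linearizer_on n field_differentiable at z"
    using holomorphic_on_imp_differentiable_at[OF linearizer_on_holomorphic open_ball] n by simp
  moreover have "linearizer_on n w = linearizer w" if "dist w z < b ^ n * eps - norm z" for w
  proof -
    have "norm w < b ^ n * eps"
      using that norm_triangle_ineq2[of w z] by (simp add: dist_norm)
    then show ?thesis
      using linearizer_eq by simp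
  qed
  ultimately show "linearizer field_differentiable at z within UNIV"
    using field_differentiable_transform_within[of "b ^ n * eps - norm z" z UNIV
        "linearizer_on n" linearizer] n by simp
qed

lemma is_linearizer_linearizer: "is_linearizer linearizer"
  unfolding is_linearizer_def
proof (intro conjI allI linearizer_holomorphic)
  fix z :: complex
  obtain n where n: "norm z < b ^ n * eps"
    using ex_radius_power_b by blast
  then have "norm (of_real b * z) < b ^ Suc n * eps"
    using b_pos by (simp add: norm_mult)
  then have "linearizer (of_real b * z) = linearizer_on (Suc n) (of_real b * z)"
    by (rule linearizer_eq)
  also have "\<dots> = E0 (linearizer_on n z)"
    using b_pos by (simp add: linearizer_on_def del: funpow.simps) (simp add: field_simps)
  also have "\<dots> = E0 (linearizer z)"
    using linearizer_eq[OF n] by simp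
  finally show "linearizer (of_real b * z) = E0 (linearizer z)" .
next
  show "linearizer 0 = 0"
    using linearizer_eq_phi[of 0] phi_inverse[of 0] koenigs_inj r1_pos eps_pos
    by (auto simp: inj_on_def)
  show "(linearizer has_field_derivative 1) (at 0)"
    by (rule has_field_derivative_transform_within_open[OF phi_has_derivative_1 open_ball, of 0 eps])
      (use eps_pos linearizer_eq_phi in auto)
qed

lemma eq_linearizer:
  assumes T: "is_linearizer T"
  shows "T = linearizer"
proof -
  obtain d where d: "0 < d" "\<And>x. norm x < d \<Longrightarrow> norm (T x) < r1 \<and> koenigs (T x) = x"
    using koenigs_linearizer_near_0[OF T r1_pos] by blast
  have near_0: "T x = linearizer x" if x: "x \<in> ball 0 (min d eps)" for x
  proof -
    have "T x \<in> ball 0 r1" "phi x \<in> ball 0 r1" "koenigs (T x) = koenigs (phi x)"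
      using d(2)[of x] phi_inverse[of x] x by auto
    then show ?thesis
      using koenigs_inj linearizer_eq_phi x by (auto simp: inj_on_def)
  qed
  have "T z = linearizer z" for z
    by (rule analytic_continuation_open[of "ball 0 (min d eps)" UNIV])
      (use near_0 d(1) eps_pos T linearizer_holomorphic in \<open>auto simp: is_linearizer_def\<close>)
  then show ?thesis ..
qed

end

context exp_linearization
begin

lemma exp_linearization_inverse_exists:
  obtains r1 eps phi where "exp_linearization_inverse b r1 eps phi"
  using koenigs_local_inverse unfolding exp_linearization_inverse_def
    exp_linearization_inverse_axioms_def by (metis exp_linearization_axioms)

lemma linearizer_exists: "\<exists>T. is_linearizer T"
  using exp_linearization_inverse_exists exp_linearization_inverse.is_linearizer_linearizer
  by metis

lemma linearizer_unique:
  assumes "is_linearizer T1" and "is_linearizer T2"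
  shows "T1 = T2"
  using exp_linearization_inverse_exists exp_linearization_inverse.eq_linearizer assms by metis

text \<open>Schwarz reflection: \<open>cnj \<circ> T \<circ> cnj\<close> is again a linearizer, since \<open>b\<close> is real.\<close>

lemma linearizer_real:
  assumes T: "is_linearizer T"
  shows "T (of_real x) \<in> \<real>"
proof -
  define T' where "T' = cnj \<circ> T \<circ> cnj"
  have "T' holomorphic_on UNIV"
    unfolding T'_def using T by (intro holomorphic_on_compose_cnj_cnj) (auto simp: is_linearizer_def)
  moreover have "T' (of_real b * z) = E0 (T' z)" for z
    using T by (simp add: T'_def is_linearizer_def E0_def exp_cnj)
  moreover have "T' 0 = 0"
    using T by (simp add: T'_def is_linearizer_def)
  moreover have "(T' has_field_derivative 1) (at 0)"
    using T has_field_derivative_cnj_cnj[of T 1 0] by (simp add: T'_def is_linearizer_def)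
  ultimately have "T' = T"
    using linearizer_unique T by (auto simp: is_linearizer_def)
  then have "cnj (T (of_real x)) = T (of_real x)"
    by (metis T'_def comp_apply complex_cnj_complex_of_real)
  then show ?thesis
    using Reals_cnj_iff by blast
qed

end

section \<open>The Schroeder function on the real line\<close>

locale real_schroeder =
  fixes s D :: "real \<Rightarrow> real" and b lam :: real
  assumes b_gt_1: "1 < b" and lam_pos: "0 < lam" and fixed_point: "lam * exp b = b"
    and functional_eq: "\<And>x. s (b * x) = lam * exp (s x)"
    and has_derivative: "\<And>x. (s has_real_derivative D x) (at x)"
    and isCont_D_0: "isCont D 0" and D_0: "D 0 = 1" and s_0: "s 0 = b"
begin

lemma b_pos: "0 < b"
  using b_gt_1 by simp

lemma s_eq_exp_s_div_b: "s x = lam * exp (s (x / b))"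
  using functional_eq[of "x / b"] b_pos by simp

lemma s_pos: "0 < s x"
  using lam_pos by (simp add: s_eq_exp_s_div_b[of x])

lemma D_eq_D_div_b: "D y = s y * D (y / b) / b"
proof -
  have "((\<lambda>x. s (b * x)) has_real_derivative D (b * x) * b) (at x)" for x
    using DERIV_chain2[OF has_derivative, of "\<lambda>x. b * x" b x] by (auto intro: derivative_eq_intros)
  moreover have "((\<lambda>x. lam * exp (s x)) has_real_derivative lam * (exp (s x) * D x)) (at x)" for x
    using DERIV_cmult[OF DERIV_fun_exp[OF has_derivative[of x]], of lam] by (simp add: mult_ac)
  moreover have "(\<lambda>x. s (b * x)) = (\<lambda>x. lam * exp (s x))"
    using functional_eq by auto
  ultimately have "D (b * x) * b = lam * (exp (s x) * D x)" for x
    using DERIV_unique by metis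
  then have "D y * b = lam * exp (s (y / b)) * D (y / b)"
    using b_pos by (metis mult.assoc nonzero_mult_div_cancel_left less_irrefl times_divide_eq_right)
  also have "\<dots> = s y * D (y / b)"
    by (simp only: s_eq_exp_s_div_b[of y])
  finally show ?thesis
    using b_pos by (simp add: field_simps)
qed

lemma D_near_0:
  obtains d where "0 < d" "\<And>y. \<bar>y\<bar> \<le> d \<Longrightarrow> 1/2 \<le> D y"
proof -
  have "D \<midarrow>0\<rightarrow> 1"
    using isCont_D_0 D_0 by (simp add: isCont_def)
  then obtain d where d: "0 < d" "\<And>y. y \<noteq> 0 \<and> norm (y - 0) < d \<Longrightarrow> norm (D y - 1) < 1/2"
    using LIM_D[OF \<open>D \<midarrow>0\<rightarrow> 1\<close>, of "1/2"] by auto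
  have "1/2 \<le> D y" if "\<bar>y\<bar> \<le> d / 2" for y
  proof (cases "y = 0")
    case True
    then show ?thesis using D_0 by simp
  next
    case False
    then have "\<bar>D y - 1\<bar> < 1/2"
      using d that by simp
    then show ?thesis
      by linarith
  qed
  then show ?thesis
    using that[of "d / 2"] d(1) by simp
qed

lemma D_pos: "0 < D y"
proof -
  obtain d where d: "0 < d" "\<And>y. \<bar>y\<bar> \<le> d \<Longrightarrow> 1/2 \<le> D y"
    using D_near_0 by blast
  show ?thesis
  proof (rule real_scaling_induct[OF b_gt_1 d(1), where P = "\<lambda>y. 0 < D y"])
    show "0 < D y" if "\<bar>y\<bar> \<le> d" for y
      using d(2)[OF that] by linarith
    show "0 < D y" if "0 < D (y / b)" for y
      using that D_eq_D_div_b[of y] s_pos[of y] b_pos by simp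
  qed
qed

lemma s_strict_mono: "x < y \<Longrightarrow> s x < s y"
  using DERIV_pos_imp_increasing[of x y s] has_derivative D_pos by blast

lemma s_inj: "s x = s y \<Longrightarrow> x = y"
  using s_strict_mono[of x y] s_strict_mono[of y x] by (cases x y rule: linorder_cases) auto

lemma D_ge_half: "0 \<le> y \<Longrightarrow> 1/2 \<le> D y"
proof -
  obtain d where d: "0 < d" "\<And>y. \<bar>y\<bar> \<le> d \<Longrightarrow> 1/2 \<le> D y"
    using D_near_0 by blast
  have "0 \<le> y \<longrightarrow> 1/2 \<le> D y"
  proof (rule real_scaling_induct[OF b_gt_1 d(1), where P = "\<lambda>y. 0 \<le> y \<longrightarrow> 1/2 \<le> D y"])
    show "0 \<le> y \<longrightarrow> 1/2 \<le> D y" if "\<bar>y\<bar> \<le> d" for y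
      using d(2)[OF that] by blast
    show "0 \<le> y \<longrightarrow> 1/2 \<le> D y" if IH: "0 \<le> y / b \<longrightarrow> 1/2 \<le> D (y / b)" for y
    proof
      assume y: "0 \<le> y"
      have "b \<le> s y"
        using s_0 s_strict_mono[of 0 y] y by (cases "y = 0") auto
      moreover have "1/2 \<le> D (y / b)"
        using IH y b_pos by simp
      ultimately have "b * (1/2) \<le> s y * D (y / b)"
        using b_pos by (intro mult_mono) auto
      then show "1/2 \<le> D y"
        using D_eq_D_div_b[of y] b_pos by (simp add: le_divide_eq)
    qed
  qed
  then show "0 \<le> y \<Longrightarrow> 1/2 \<le> D y" ..
qed

lemma s_diff_ge:
  assumes "0 \<le> x" "x \<le> y"
  shows "(y - x) / 2 \<le> s y - s x"
proof (cases "x = y")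
  case True
  then show ?thesis by simp
next
  case False
  then have "x < y"
    using assms by simp
  then obtain z where z: "x < z" "z < y" "s y - s x = (y - x) * D z"
    using MVT2[of x y s D] has_derivative by blast
  have "(y - x) * (1/2) \<le> (y - x) * D z"
    using D_ge_half[of z] z assms by (intro mult_left_mono) auto
  then show ?thesis
    using z by simp
qed

definition s_inv :: "real \<Rightarrow> real" where
  "s_inv y = (THE x. s x = y)"

lemma s_s_inv:
  assumes "b \<le> y"
  shows "s (s_inv y) = y"
proof -
  have "y \<le> s (2 * (y - b))"
    using s_diff_ge[of 0 "2 * (y - b)"] assms s_0 by simp
  then obtain x where "s x = y"
    using IVT[of s 0 y "2 * (y - b)"] has_derivative DERIV_isCont assms s_0 by fastforce
  then have "s_inv y = x"
    unfolding s_inv_def using s_inj by blast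
  then show ?thesis
    using \<open>s x = y\<close> by simp
qed

lemma filterlim_s_inv_at_top: "filterlim s_inv at_top at_top"
  unfolding filterlim_at_top
proof
  fix Z :: real
  show "\<forall>\<^sub>F y in at_top. Z \<le> s_inv y"
    using eventually_ge_at_top[of "max b (s Z)"]
  proof (rule eventually_mono)
    fix y
    assume "max b (s Z) \<le> y"
    then show "Z \<le> s_inv y"
      using s_s_inv[of y] s_strict_mono[of "s_inv y" Z] by (cases "Z \<le> s_inv y") auto
  qed
qed

lemma tendsto_s_scaled_ratio:
  assumes c: "0 < c" "c < 1"
  shows "((\<lambda>u. s (c * u) / s u) \<longlongrightarrow> 0) at_top"
proof -
  define k where "k = (1 - c) / (2 * b)"
  have "0 < k"
    using c b_pos by (simp add: k_def)
  then have "((\<lambda>u. exp (- (k * u))) \<longlongrightarrow> 0) at_top"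
    by (intro tendsto_exp_minus_0 filterlim_tendsto_pos_mult_at_top[OF tendsto_const _ filterlim_ident])
  moreover have "\<forall>\<^sub>F u in at_top. norm (s (c * u) / s u) \<le> exp (- (k * u))"
    using eventually_ge_at_top[of 0]
  proof (rule eventually_mono)
    fix u :: real
    assume u: "0 \<le> u"
    have "s (c * u) / s u = exp (s (c * u / b) - s (u / b))"
      using lam_pos by (simp add: s_eq_exp_s_div_b[of "c * u"] s_eq_exp_s_div_b[of u] exp_diff)
    moreover have "k * u \<le> s (u / b) - s (c * u / b)"
      using s_diff_ge[of "c * u / b" "u / b"] u c b_pos
      by (simp add: k_def field_simps mult_left_le_one_le)
    ultimately show "norm (s (c * u) / s u) \<le> exp (- (k * u))"
      using s_pos[of "c * u"] s_pos[of u] by simp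
  qed
  ultimately show ?thesis
    by (rule Lim_null_comparison[rotated])
qed

text \<open>Since \<open>s = lam * exp (s (\<cdot> / b))\<close>, the ratio is \<open>exp ((\<gamma> - 1) ln lam + \<gamma> s (d v / b) - s (v / b))\<close>;
  the exponent tends to \<open>-\<infinity>\<close> because eventually \<open>\<gamma> s (d w) \<le> s w / 2\<close> while \<open>s w \<ge> w / 2\<close>.\<close>

lemma tendsto_s_powr_scaled_ratio:
  assumes d: "0 < d" "d < 1" and \<gamma>: "0 < \<gamma>"
  shows "((\<lambda>v. s (d * v) powr \<gamma> / s v) \<longlongrightarrow> 0) at_top"
proof -
  define G where "G w = s w - \<gamma> * s (d * w)" for w
  have "\<forall>\<^sub>F w in at_top. s (d * w) / s w \<le> 1 / (2 * \<gamma>)"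
  proof -
    have "\<forall>\<^sub>F w in at_top. norm (s (d * w) / s w - 0) < 1 / (2 * \<gamma>)"
      using tendsto_s_scaled_ratio[OF d] \<gamma> by (simp add: tendsto_iff dist_norm del: norm_divide)
    then show ?thesis
      by (rule eventually_mono) (use s_pos in \<open>simp add: abs_of_pos\<close>)
  qed
  then have "\<forall>\<^sub>F w in at_top. w / 4 \<le> G w"
    using eventually_ge_at_top[of 0]
  proof eventually_elim
    case (elim w)
    then have "\<gamma> * s (d * w) \<le> s w / 2"
      using s_pos[of w] \<gamma> by (simp add: field_simps)
    moreover have "w / 2 \<le> s w - b"
      using s_diff_ge[of 0 w] elim(2) s_0 by simp
    ultimately show ?case
      using b_pos unfolding G_def by simp
  qed
  moreover have "filterlim (\<lambda>w::real. w / 4) at_top at_top"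
    by (rule filterlim_tendsto_pos_mult_at_top[of "\<lambda>_. 1/4" "1/4" _ "\<lambda>w. w", simplified])
      (simp_all add: filterlim_ident)
  ultimately have "filterlim G at_top at_top"
    by (rule filterlim_at_top_mono[rotated])
  moreover have "filterlim (\<lambda>v::real. v / b) at_top at_top"
    by (rule filterlim_tendsto_pos_mult_at_top[of "\<lambda>_. 1/b" "1/b" _ "\<lambda>w. w", simplified])
      (simp_all add: filterlim_ident b_pos)
  ultimately have "filterlim (\<lambda>v. G (v / b)) at_top at_top"
    by (rule filterlim_compose)
  then have "filterlim (\<lambda>v. (1 - \<gamma>) * ln lam + G (v / b)) at_top at_top"
    by (rule filterlim_tendsto_add_at_top[OF tendsto_const])
  then have "((\<lambda>v. exp (- ((1 - \<gamma>) * ln lam + G (v / b)))) \<longlongrightarrow> 0) at_top"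
    by (rule tendsto_exp_minus_0)
  moreover have "s (d * v) powr \<gamma> / s v = exp (- ((1 - \<gamma>) * ln lam + G (v / b)))" for v
  proof -
    have "s (d * v) powr \<gamma> = exp (\<gamma> * (ln lam + s (d * (v / b))))"
      using s_eq_exp_s_div_b[of "d * v"] lam_pos s_pos[of "d * v"]
      by (simp add: powr_def ln_mult)
    moreover have "s v = exp (ln lam + s (v / b))"
      using s_eq_exp_s_div_b[of v] lam_pos by (simp add: exp_add)
    ultimately show ?thesis
      by (simp add: G_def exp_diff [symmetric] algebra_simps)
  qed
  ultimately show ?thesis
    by simp
qed

lemma powr_b_minus_bounds:
  assumes "0 < r"
  shows "0 < b powr (- r)" and "b powr (- r) < 1"
  using assms b_gt_1 by (simp_all add: powr_less_one)

lemma tendsto_iterate_div_id: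
  assumes "0 < r"
  shows "((\<lambda>x. s (b powr (- r) * s_inv x) / x) \<longlongrightarrow> 0) at_top"
proof -
  have "((\<lambda>x. s (b powr (- r) * s_inv x) / s (s_inv x)) \<longlongrightarrow> 0) at_top"
    using filterlim_compose[OF tendsto_s_scaled_ratio[OF powr_b_minus_bounds[OF assms]]
        filterlim_s_inv_at_top] by simp
  moreover have "\<forall>\<^sub>F x in at_top. s (b powr (- r) * s_inv x) / s (s_inv x)
      = s (b powr (- r) * s_inv x) / x"
    using eventually_ge_at_top[of b] by (rule eventually_mono) (simp add: s_s_inv)
  ultimately show ?thesis
    by (simp add: tendsto_cong)
qed

lemma tendsto_iterate_powr_ratio:
  assumes "0 < r" "r < r'" "0 < \<gamma>"
  shows "((\<lambda>x. s (b powr (- r') * s_inv x) powr \<gamma> / s (b powr (- r) * s_inv x)) \<longlongrightarrow> 0) at_top"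
proof -
  define c d where "c = b powr (- r)" and "d = b powr (- (r' - r))"
  have c_lim: "filterlim (\<lambda>x. c * s_inv x) at_top at_top"
    using powr_b_minus_bounds[OF assms(1)] unfolding c_def
    by (intro filterlim_tendsto_pos_mult_at_top[OF tendsto_const _ filterlim_s_inv_at_top])
  have d: "0 < d" "d < 1"
    using assms powr_b_minus_bounds[of "r' - r"] by (auto simp: d_def)
  have "((\<lambda>x. s (d * (c * s_inv x)) powr \<gamma> / s (c * s_inv x)) \<longlongrightarrow> 0) at_top"
    using filterlim_compose[OF tendsto_s_powr_scaled_ratio[OF d assms(3)] c_lim] by simp
  moreover have "b powr (- r') = d * c"
    unfolding c_def d_def using b_pos by (simp add: powr_add [symmetric])
  ultimately show ?thesis
    by (simp add: c_def mult.assoc)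
qed

end

section \<open>The Schroeder function of \<open>E\<close>\<close>

definition is_schroeder :: "real \<Rightarrow> (complex \<Rightarrow> complex) \<Rightarrow> bool" where
  "is_schroeder lam S \<longleftrightarrow> S holomorphic_on UNIV
     \<and> (\<forall>z. S (of_real (fixB lam) * z) = of_real lam * exp (S z))
     \<and> S 0 = of_real (fixB lam) \<and> deriv S 0 = 1"

lemma is_schroeder_iff_is_linearizer:
  fixes lam :: real
  assumes lam: "0 < lam" "lam < exp (-1)"
  shows "is_schroeder lam S \<longleftrightarrow> exp_linearization.is_linearizer (fixB lam) (\<lambda>z. S z - of_real (fixB lam))"
proof -
  define b where "b = fixB lam"
  interpret exp_linearization b
    using fixB_spec[OF lam] by unfold_locales (simp add: b_def)
  have "of_real lam * exp (of_real b) = (of_real b :: complex)"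
    using fixB_spec(2)[OF lam] by (metis b_def exp_of_real of_real_mult)
  then have "of_real lam * exp (S z) = of_real b * exp (S z - of_real b)" for z
    by (simp add: exp_diff field_simps)
  then have functional_eq: "S (of_real b * z) = of_real lam * exp (S z)
      \<longleftrightarrow> S (of_real b * z) - of_real b = E0 (S z - of_real b)" for z
    by (auto simp: E0_def algebra_simps)
  have holomorphic: "S holomorphic_on UNIV \<longleftrightarrow> (\<lambda>z. S z - of_real b) holomorphic_on UNIV"
    using holomorphic_on_add[of "\<lambda>z. S z - of_real b" UNIV "\<lambda>_. of_real b"]
    by (auto intro!: holomorphic_intros)
  have derivative: "deriv S 0 = 1 \<longleftrightarrow> ((\<lambda>z. S z - of_real b) has_field_derivative 1) (at 0)"
    if "S holomorphic_on UNIV"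
  proof -
    have "(S has_field_derivative deriv S 0) (at 0)"
      using that by (meson DERIV_deriv_iff_field_differentiable UNIV_I
          holomorphic_on_imp_differentiable_at open_UNIV)
    then have "((\<lambda>z. S z - of_real b) has_field_derivative deriv S 0) (at 0)"
      by (auto intro!: derivative_eq_intros)
    then show ?thesis
      by (metis DERIV_unique)
  qed
  show ?thesis
    unfolding is_schroeder_def is_linearizer_def b_def [symmetric]
    using functional_eq holomorphic derivative by auto
qed

lemma is_schroeder_schroeder:
  fixes lam :: real
  assumes lam: "0 < lam" "lam < exp (-1)"
  shows "is_schroeder lam (schroeder lam)"
proof -
  interpret exp_linearization "fixB lam"
    using fixB_spec[OF lam] by unfold_locales
  obtain T where T: "is_linearizer T"
    using linearizer_exists by blast
  have "is_schroeder lam (\<lambda>z. of_real (fixB lam) + T z)"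
    using T by (simp add: is_schroeder_iff_is_linearizer[OF lam])
  moreover have "S = S'" if "is_schroeder lam S" "is_schroeder lam S'" for S S'
  proof -
    have "(\<lambda>z. S z - of_real (fixB lam)) = (\<lambda>z. S' z - of_real (fixB lam))"
      using that linearizer_unique by (simp add: is_schroeder_iff_is_linearizer[OF lam])
    then show ?thesis
      by (simp add: fun_eq_iff)
  qed
  ultimately have "\<exists>!S. is_schroeder lam S"
    by blast
  then have "is_schroeder lam (THE S. is_schroeder lam S)"
    by (rule theI')
  then show ?thesis
    by (simp add: schroeder_def is_schroeder_def [abs_def])
qed

lemma schroeder_of_real:
  fixes lam :: real
  assumes lam: "0 < lam" "lam < exp (-1)"
  shows "schroeder lam (of_real x) = of_real (schroederR lam x)"
proof -
  have "exp_linearization.is_linearizer (fixB lam) (\<lambda>z. schroeder lam z - of_real (fixB lam))"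
    using is_schroeder_schroeder[OF lam] is_schroeder_iff_is_linearizer[OF lam] by blast
  then have "schroeder lam (of_real x) - of_real (fixB lam) \<in> \<real>"
    using exp_linearization.linearizer_real fixB_spec(1)[OF lam] exp_linearization.intro by blast
  then have "schroeder lam (of_real x) \<in> \<real>"
    by (metis Reals_add Reals_of_real diff_add_cancel)
  then show ?thesis
    by (simp add: schroederR_def complex_is_Real_iff complex_eq_iff)
qed

lemma real_schroeder_schroederR:
  fixes lam :: real
  assumes lam: "0 < lam" "lam < exp (-1)"
  shows "real_schroeder (schroederR lam) (\<lambda>x. Re (deriv (schroeder lam) (of_real x))) (fixB lam) lam"
proof -
  have S: "schroeder lam holomorphic_on UNIV"
    "\<And>z. schroeder lam (of_real (fixB lam) * z) = of_real lam * exp (schroeder lam z)"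
    "schroeder lam 0 = of_real (fixB lam)" "deriv (schroeder lam) 0 = 1"
    using is_schroeder_schroeder[OF lam] by (auto simp: is_schroeder_def)
  show ?thesis
  proof
    show "1 < fixB lam" "0 < lam" "lam * exp (fixB lam) = fixB lam"
      using fixB_spec[OF lam] lam by auto
    show "schroederR lam (fixB lam * x) = lam * exp (schroederR lam x)" for x
      using S(2)[of "of_real x"] schroeder_of_real[OF lam]
      by (metis exp_of_real of_real_eq_iff of_real_mult)
    show "(schroederR lam has_real_derivative Re (deriv (schroeder lam) (of_real x))) (at x)" for x
    proof -
      have "(schroeder lam has_field_derivative deriv (schroeder lam) (of_real x)) (at (of_real x))"
        using S(1) by (meson DERIV_deriv_iff_field_differentiable UNIV_I
            holomorphic_on_imp_differentiable_at open_UNIV)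
      then have "((\<lambda>x. Re (schroeder lam (of_real x))) has_real_derivative
          Re (deriv (schroeder lam) (of_real x))) (at x)"
        by (intro has_field_derivative_Re has_vector_derivative_real_field)
      then show ?thesis
        by (simp add: schroederR_def [abs_def])
    qed
    have "continuous_on UNIV (deriv (schroeder lam))"
      using S(1) by (intro holomorphic_on_imp_continuous_on holomorphic_deriv) auto
    then have "isCont (\<lambda>x::real. deriv (schroeder lam) (of_real x)) 0"
      by (intro isCont_o2[where f = of_real and g = "deriv (schroeder lam)"])
        (auto simp: continuous_on_eq_continuous_at intro: continuous_intros)
    then show "isCont (\<lambda>x. Re (deriv (schroeder lam) (of_real x))) 0"
      by (rule isCont_Re)
    show "Re (deriv (schroeder lam) (of_real 0)) = 1" "schroederR lam 0 = fixB lam"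
      using S(3,4) by (simp_all add: schroederR_def)
  qed
qed

theorem mainTheorem8:
  fixes lam :: real
  assumes "0 < lam" and "lam < exp (-1)"
  shows "(\<forall>r>0. ((\<lambda>x. iterL lam r x / x) \<longlongrightarrow> 0) at_top)
    \<and> (\<forall>r s \<gamma>::real. 0 < r \<longrightarrow> r < s \<longrightarrow> 0 < \<gamma> \<longrightarrow>
         ((\<lambda>x. (iterL lam s x) powr \<gamma> / iterL lam r x) \<longlongrightarrow> 0) at_top)"
proof -
  interpret real_schroeder "schroederR lam" "\<lambda>x. Re (deriv (schroeder lam) (of_real x))" "fixB lam" lam
    using real_schroeder_schroederR[OF assms] .
  have iterL_eq: "\<forall>\<^sub>F x in at_top. iterL lam r x = schroederR lam (fixB lam powr (- r) * s_inv x)" for r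
    using eventually_gt_at_top[of "fixA lam"]
    by eventually_elim (simp add: iterL_def iterE_def s_inv_def schroederR_inv_def)
  show ?thesis
  proof (intro conjI allI impI)
    fix r :: real
    assume "0 < r"
    then show "((\<lambda>x. iterL lam r x / x) \<longlongrightarrow> 0) at_top"
      by (rule Lim_transform_eventually[OF tendsto_iterate_div_id])
        (use iterL_eq[of r] in eventually_elim, simp)
  next
    fix r r' \<gamma> :: real
    assume "0 < r" "r < r'" "0 < \<gamma>"
    then show "((\<lambda>x. iterL lam r' x powr \<gamma> / iterL lam r x) \<longlongrightarrow> 0) at_top"
      by (rule Lim_transform_eventually[OF tendsto_iterate_powr_ratio])
        (use iterL_eq[of r] iterL_eq[of r'] in eventually_elim, simp)
  qed
qed

end
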